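(* For every $Y\in\mathcal A_X$ and every $\mathbf U\in\mathcal E([0,T];\mathcal A_X^{\otimes 2})$, $$\varphi\big(Y\,\delta^X(\mathbf U)^*\big)=(\varphi\times\varphi)\big(\langle D^XY;\mathbf U^*\rangle_{\mathcal H}\big).$$
   Context: NC probability space: a pair $(\mathcal A,\varphi)$ with $\mathcal A$ a unital complex Banach $*$-algebra with $\|XY\|\le\|X\|\|Y\|$, $\|X^*X\|=\|X\|^2$, and $\varphi$ a linear functional with $\varphi(1)=1$, $\varphi(XY)=\varphi(YX)$, $\varphi(X^*X)\ge0$, $\varphi(X^*X)=0\Rightarrow X=0$. For $k\ge2$, $\mathcal A^{\otimes k}$ is the algebraic tensor product with componentwise product $(F_1\otimes\cdots\otimes F_k)\cdot(G_1\otimes\cdots\otimes G_k)=(F_1G_1)\otimes\cdots\otimes(F_kG_k)$, involution $(F_1\otimes\cdots\otimes F_k)^*=F_1^*\otimes\cdots\otimes F_k^*$, and $\varphi^{\times k}(F_1\otimes\cdots\otimes F_k)=\varphi(F_1)\cdots\varphi(F_k)$ (written $\varphi\times\varphi$, $\varphi\times\varphi\times\varphi$), all extended linearly. Also $(F_1\otimes F_2)\sharp G:=F_1GF_2$ and $(\mathrm{Id}\times\varphi\times\mathrm{Id})(F_1\otimes F_2\otimes F_3):=\varphi(F_2)F_1F_3$, extended linearly. A centered semicircular process $\{X_t\}_{t\in[0,T]}$ is a family of self-adjoint elements whose mixed moments satisfy the free Wick formula $\varphi(X_{t_1}\cdots X_{t_r})=\sum_{\pi\in NC_2(r)}\prod_{\{p,q\}\in\pi}\varphi(X_{t_p}X_{t_q})$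 for even $r$ ($NC_2(r)$ = non-crossing pairings of $\{1,\dots,r\}$) and vanishing odd moments. Fix $T>0$ and a centered semicircular process $\{X_t\}_{t\in[0,T]}$ in $(\mathcal A,\varphi)$; $\mathcal A_X$ is the unital subalgebra generated by $\{X_t\}$. $\mathcal E([0,T];\mathbb R)$ is the space of step functions $h=\sum_i\alpha_i\mathbf 1_{[a_i,b_i)}$ ($\alpha_i\in\mathbb R$, $0\le a_i<b_i\le T$), and $X(h):=\sum_i\alpha_i(X_{b_i}-X_{a_i})$. $\mathcal H$ is the completion of $\mathcal E([0,T];\mathbb R)$ for the inner product determined by $\langle\mathbf 1_{[0,s]},\mathbf 1_{[0,t]}\rangle_{\mathcal H}=\varphi(X_sX_t)$. For an algebra $E$, $\mathcal E([0,T];E)$ is the set of finite sums $t\mapsto\sum_i x_ih_i(t)$ with $x_i\in E$, $h_i\in\mathcal E([0,T];\mathbb R)$. Pairings: $\langle xh,k\rangle_{\mathcal H}=\langle h,xk\rangle_{\mathcal H}:=x\langle h,k\rangle_{\mathcal H}$ and $\langle xh;yk\rangle_{\mathcal H}:=(x\cdot y)\langle h,k\rangle_{\mathcal H}$, extended bilinearly; for $\mathbf U=\sum_ix_ih_i$, $\mathbf U^*:=\sum_ix_i^*h_i$. The derivative $D^X:\mathcal A_X\to\mathcal E([0,T];\mathcal A_X^{\otimes2})$ is the linear map with $D^X1=0$ and $D^X\big(X(h_1)\cdots X(h_m)\big)=\sum_{i=1}^m\big[(X(h_1)\cdots X(h_{i-1}))\otimes(X(h_{i+1})\cdots X(h_m))\big]h_i$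 (empty products $=1$). For $F_1,F_2\in\mathcal A_X$, $D^X_1(F_1\otimes F_2):=D^XF_1\otimes F_2$, $D^X_2(F_1\otimes F_2):=F_1\otimes D^XF_2$ (in $\mathcal E([0,T];\mathcal A_X^{\otimes3})$), extended linearly, and $D^X:=D^X_1+D^X_2$ on $\mathcal A_X^{\otimes2}$. The divergence is defined for $\mathbf F\in\mathcal A_X^{\otimes2}$, $h\in\mathcal E([0,T];\mathbb R)$ by $\delta^X(\mathbf Fh):=\mathbf F\sharp X(h)-(\mathrm{Id}\times\varphi\times\mathrm{Id})\big(\langle D^X\mathbf F,h\rangle_{\mathcal H}\big)$ and extended linearly to $\mathcal E([0,T];\mathcal A_X^{\otimes2})$. *)

theory Defs
  imports "HOL-Analysis.Analysis"
begin

text \<open>The complex structure is given by an explicit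
complex scalar multiplication sc, the involution by st, and the state by phi.\<close>

definition nc_prob_space ::
  "(complex \<Rightarrow> 'a::{real_normed_algebra_1,banach} \<Rightarrow> 'a) \<Rightarrow> ('a \<Rightarrow> 'a) \<Rightarrow> ('a \<Rightarrow> complex) \<Rightarrow> bool"
where
  "nc_prob_space sc st phi \<longleftrightarrow>
     \<comment> \<open>complex Banach algebra structure\<close>
     (\<forall>r x. sc (complex_of_real r) x = scaleR r x) \<and>
     (\<forall>c d x. sc (c + d) x = sc c x + sc d x) \<and>
     (\<forall>c x y. sc c (x + y) = sc c x + sc c y) \<and>
     (\<forall>c d x. sc (c * d) x = sc c (sc d x)) \<and>
     (\<forall>c x y. sc c (x * y) = sc c x * y) \<and>
     (\<forall>c x y. sc c (x * y) = x * sc c y) \<and>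
     (\<forall>c x. norm (sc c x) = cmod c * norm x) \<and>
     \<comment> \<open>involution, C*-identity\<close>
     (\<forall>x y. st (x + y) = st x + st y) \<and>
     (\<forall>c x. st (sc c x) = sc (cnj c) (st x)) \<and>
     (\<forall>x y. st (x * y) = st y * st x) \<and>
     (\<forall>x. st (st x) = x) \<and>
     (\<forall>x. norm (st x * x) = (norm x)\<^sup>2) \<and>
     \<comment> \<open>faithful tracial state\<close>
     (\<forall>x y. phi (x + y) = phi x + phi y) \<and>
     (\<forall>c x. phi (sc c x) = c * phi x) \<and>
     phi 1 = 1 \<and>
     (\<forall>x y. phi (x * y) = phi (y * x)) \<and>
     (\<forall>x. Im (phi (st x * x)) = 0 \<and> Re (phi (st x * x)) \<ge> 0) \<and>
     (\<forall>x. phi (st x * x) = 0 \<longrightarrow> x = 0)"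

definition nc_pairing :: "nat \<Rightarrow> nat set set \<Rightarrow> bool" where
  "nc_pairing r \<pi> \<longleftrightarrow>
     (\<forall>B\<in>\<pi>. card B = 2) \<and> \<Union>\<pi> = {..<r} \<and>
     (\<forall>B\<in>\<pi>. \<forall>C\<in>\<pi>. B \<noteq> C \<longrightarrow> B \<inter> C = {}) \<and>
     (\<forall>B\<in>\<pi>. \<forall>C\<in>\<pi>. \<not> (Min B < Min C \<and> Min C < Max B \<and> Max B < Max C))"

definition NC2 :: "nat \<Rightarrow> nat set set set" where
  "NC2 r = {\<pi>. nc_pairing r \<pi>}"

definition semicircular_process ::
  "('a::{real_normed_algebra_1,banach} \<Rightarrow> 'a) \<Rightarrow> ('a \<Rightarrow> complex) \<Rightarrow> real \<Rightarrow> (real \<Rightarrow> 'a) \<Rightarrow> bool"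
where
  "semicircular_process st phi T X \<longleftrightarrow>
     (\<forall>t\<in>{0..T}. st (X t) = X t) \<and>
     (\<forall>ts. set ts \<subseteq> {0..T} \<longrightarrow>
        phi (prod_list (map X ts)) =
          (if even (length ts)
           then (\<Sum>\<pi>\<in>NC2 (length ts). \<Prod>B\<in>\<pi>. phi (X (ts ! Min B) * X (ts ! Max B)))
           else 0))"

text \<open>A step function is represented by a list of triples (alpha, a, b), standing for
sum alpha * indicator [a,b).\<close>

type_synonym stepfn = "(real \<times> real \<times> real) list"

definition step_in :: "real \<Rightarrow> stepfn \<Rightarrow> bool" where
  "step_in T h \<longleftrightarrow> (\<forall>(\<alpha>, a, b)\<in>set h. 0 \<le> a \<and> a < b \<and> b \<le> T)"

definition Xh :: "(real \<Rightarrow> 'a::real_vector) \<Rightarrow> stepfn \<Rightarrow> 'a" where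
  "Xh X h = (\<Sum>(\<alpha>, a, b)\<leftarrow>h. scaleR \<alpha> (X b - X a))"

text \<open>Inner product of H on step functions: bilinear extension of
<1_[0,s], 1_[0,t]> = phi (X s * X t), i.e. <h,k> = phi (X(h) X(k)).\<close>

definition ipH :: "('a::real_algebra \<Rightarrow> complex) \<Rightarrow> (real \<Rightarrow> 'a) \<Rightarrow> stepfn \<Rightarrow> stepfn \<Rightarrow> complex" where
  "ipH phi X h k = phi (Xh X h * Xh X k)"

text \<open>An element of A_X, given as a (complex) linear combination of monomials
X(h_1)...X(h_m).\<close>

type_synonym polyX = "(complex \<times> stepfn list) list"

definition polyX_in :: "real \<Rightarrow> polyX \<Rightarrow> bool" where
  "polyX_in T P \<longleftrightarrow> (\<forall>(c, hs)\<in>set P. \<forall>h\<in>set hs. step_in T h)"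

definition evalX :: "(complex \<Rightarrow> 'a \<Rightarrow> 'a) \<Rightarrow> (real \<Rightarrow> 'a::{real_algebra_1}) \<Rightarrow> polyX \<Rightarrow> 'a" where
  "evalX sc X P = (\<Sum>(c, hs)\<leftarrow>P. sc c (prod_list (map (Xh X) hs)))"

text \<open>Algebraic tensors represented as finite formal sums of simple tensors.\<close>

type_synonym 'a tens2 = "('a \<times> 'a) list"
type_synonym 'a tens3 = "('a \<times> 'a \<times> 'a) list"
type_synonym 'a E2 = "('a tens2 \<times> stepfn) list"
type_synonym 'a E3 = "('a tens3 \<times> stepfn) list"

definition tens2_mult :: "'a::times tens2 \<Rightarrow> 'a tens2 \<Rightarrow> 'a tens2" where
  "tens2_mult x y = [(a * c, b * d). (a, b) \<leftarrow> x, (c, d) \<leftarrow> y]"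

definition tens2_star :: "('a \<Rightarrow> 'a) \<Rightarrow> 'a tens2 \<Rightarrow> 'a tens2" where
  "tens2_star st x = map (\<lambda>(a, b). (st a, st b)) x"

definition tens2_scale :: "(complex \<Rightarrow> 'a \<Rightarrow> 'a) \<Rightarrow> complex \<Rightarrow> 'a tens2 \<Rightarrow> 'a tens2" where
  "tens2_scale sc c x = map (\<lambda>(a, b). (sc c a, b)) x"

definition tens3_scale :: "(complex \<Rightarrow> 'a \<Rightarrow> 'a) \<Rightarrow> complex \<Rightarrow> 'a tens3 \<Rightarrow> 'a tens3" where
  "tens3_scale sc c x = map (\<lambda>(a, b, d). (sc c a, b, d)) x"

definition phi2 :: "('a \<Rightarrow> complex) \<Rightarrow> 'a tens2 \<Rightarrow> complex" where
  "phi2 phi x = (\<Sum>(a, b)\<leftarrow>x. phi a * phi b)"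

definition sharp :: "'a::{monoid_add,times} tens2 \<Rightarrow> 'a \<Rightarrow> 'a" where
  "sharp x G = (\<Sum>(a, b)\<leftarrow>x. a * G * b)"

definition IdphiId :: "(complex \<Rightarrow> 'a \<Rightarrow> 'a) \<Rightarrow> ('a \<Rightarrow> complex) \<Rightarrow> 'a::{monoid_add,times} tens3 \<Rightarrow> 'a" where
  "IdphiId sc phi z = (\<Sum>(a, b, d)\<leftarrow>z. sc (phi b) (a * d))"

definition pairH3 :: "(complex \<Rightarrow> 'a \<Rightarrow> 'a) \<Rightarrow> ('a::real_algebra \<Rightarrow> complex) \<Rightarrow> (real \<Rightarrow> 'a)
    \<Rightarrow> 'a E3 \<Rightarrow> stepfn \<Rightarrow> 'a tens3" where
  "pairH3 sc phi X U k = concat (map (\<lambda>(x, h). tens3_scale sc (ipH phi X h k) x) U)"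

definition pairH_semi :: "(complex \<Rightarrow> 'a \<Rightarrow> 'a) \<Rightarrow> ('a::real_algebra \<Rightarrow> complex) \<Rightarrow> (real \<Rightarrow> 'a)
    \<Rightarrow> 'a E2 \<Rightarrow> 'a E2 \<Rightarrow> 'a tens2" where
  "pairH_semi sc phi X U V =
     concat [tens2_scale sc (ipH phi X h k) (tens2_mult x y). (x, h) \<leftarrow> U, (y, k) \<leftarrow> V]"

definition E2_star :: "('a \<Rightarrow> 'a) \<Rightarrow> 'a E2 \<Rightarrow> 'a E2" where
  "E2_star st U = map (\<lambda>(x, h). (tens2_star st x, h)) U"

definition DX :: "(complex \<Rightarrow> 'a \<Rightarrow> 'a) \<Rightarrow> (real \<Rightarrow> 'a::real_algebra_1) \<Rightarrow> polyX \<Rightarrow> 'a E2" where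
  "DX sc X P = concat (map (\<lambda>(c, hs).
       map (\<lambda>i. ([(sc c (prod_list (map (Xh X) (take i hs))),
                   prod_list (map (Xh X) (drop (Suc i) hs)))], hs ! i))
           [0..<length hs]) P)"

text \<open>An element of E([0,T]; A_X tensor A_X): a finite sum of (F1 tensor F2) h with
F1, F2 in A_X (given as polynomials in the X(h)) and h a step function.\<close>

type_synonym EX2 = "(polyX \<times> polyX \<times> stepfn) list"

definition EX2_in :: "real \<Rightarrow> EX2 \<Rightarrow> bool" where
  "EX2_in T U \<longleftrightarrow> (\<forall>(P1, P2, h)\<in>set U. polyX_in T P1 \<and> polyX_in T P2 \<and> step_in T h)"

definition EX2_val :: "(complex \<Rightarrow> 'a \<Rightarrow> 'a) \<Rightarrow> (real \<Rightarrow> 'a::real_algebra_1) \<Rightarrow> EX2 \<Rightarrow> 'a E2" where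
  "EX2_val sc X U = map (\<lambda>(P1, P2, h). ([(evalX sc X P1, evalX sc X P2)], h)) U"

text \<open>D^X = D_1 + D_2 on F1 tensor F2\<close>
definition DX2 :: "(complex \<Rightarrow> 'a \<Rightarrow> 'a) \<Rightarrow> (real \<Rightarrow> 'a::real_algebra_1) \<Rightarrow> polyX \<Rightarrow> polyX \<Rightarrow> 'a E3" where
  "DX2 sc X P1 P2 =
     map (\<lambda>(x, h). (map (\<lambda>(a, b). (a, b, evalX sc X P2)) x, h)) (DX sc X P1) @
     map (\<lambda>(x, h). (map (\<lambda>(a, b). (evalX sc X P1, a, b)) x, h)) (DX sc X P2)"

definition deltaX :: "(complex \<Rightarrow> 'a \<Rightarrow> 'a) \<Rightarrow> ('a \<Rightarrow> complex) \<Rightarrow> (real \<Rightarrow> 'a::real_algebra_1)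
    \<Rightarrow> EX2 \<Rightarrow> 'a" where
  "deltaX sc phi X U = (\<Sum>(P1, P2, h)\<leftarrow>U.
      sharp [(evalX sc X P1, evalX sc X P2)] (Xh X h)
      - IdphiId sc phi (pairH3 sc phi X (DX2 sc X P1 P2) h))"

end

theory Submission
  imports Defs
begin

text \<open>Sorting the free Wick formula by the partner of the first point gives the first-moment
  recursion \<open>\<phi>(X(h) X(h\<^sub>1)\<cdots>X(h\<^sub>n)) = \<Sum>\<^sub>j \<langle>h, h\<^sub>j\<rangle> \<phi>(X(h\<^sub>1)\<cdots>X(h\<^sub>j\<^sub>-\<^sub>1)) \<phi>(X(h\<^sub>j\<^sub>+\<^sub>1)\<cdots>X(h\<^sub>n))\<close>,
  first for points \<open>X\<^sub>t\<close> and then, by multilinearity, for step functions.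
  For monomials \<open>Y\<close>, \<open>F\<^sub>1\<close>, \<open>F\<^sub>2\<close>, traciality and self-adjointness turn \<open>\<phi>(Y (F\<^sub>1 X(h) F\<^sub>2)\<^sup>*)\<close>
  into \<open>\<phi>(X(h) F\<^sub>1\<^sup>* Y F\<^sub>2\<^sup>*)\<close>, and the recursion contracts \<open>X(h)\<close> with a single factor of
  \<open>F\<^sub>1\<^sup>*\<close>, \<open>Y\<close> or \<open>F\<^sub>2\<^sup>*\<close>. The contractions with \<open>F\<^sub>1\<^sup>*\<close> and \<open>F\<^sub>2\<^sup>*\<close> are exactly the correction term
  \<open>(Id \<times> \<phi> \<times> Id)(\<langle>D\<^sup>X F, h\<rangle>)\<close> of the divergence, and those with \<open>Y\<close> make up
  \<open>(\<phi> \<times> \<phi>)(\<langle>D\<^sup>X Y; U\<^sup>*\<rangle>)\<close>. Sesquilinearity extends the identity from monomials to all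
  \<open>Y\<close> and \<open>U\<close>.\<close>

section \<open>Non-crossing pairings, split at the partner of the first point\<close>

lemma card_2_nat_E:
  assumes "card (B :: nat set) = 2"
  obtains a b where "a < b" "B = {a, b}"
proof -
  from assms obtain x y where "B = {x, y}" "x \<noteq> y" by (auto simp: card_2_iff)
  then show ?thesis using that[of x y] that[of y x] by (cases "x < y") (auto simp: insert_commute)
qed

lemma NC2_memberD:
  assumes "\<pi> \<in> NC2 r"
  shows "\<And>B. B \<in> \<pi> \<Longrightarrow> card B = 2" "\<Union>\<pi> = {..<r}"
    "\<And>B C. B \<in> \<pi> \<Longrightarrow> C \<in> \<pi> \<Longrightarrow> B \<noteq> C \<Longrightarrow> B \<inter> C = {}"
    "\<And>B C. B \<in> \<pi> \<Longrightarrow> C \<in> \<pi> \<Longrightarrow> \<not> (Min B < Min C \<and> Min C < Max B \<and> Max B < Max C)"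
  using assms by (auto simp: NC2_def nc_pairing_def)

lemma NC2_blockE:
  assumes "\<pi> \<in> NC2 r" "B \<in> \<pi>"
  obtains a b where "a < b" "b < r" "B = {a, b}"
proof -
  obtain a b where "a < b" "B = {a, b}" using card_2_nat_E NC2_memberD(1)[OF assms] by metis
  moreover have "b < r" using NC2_memberD(2)[OF assms(1)] assms(2) \<open>B = {a, b}\<close> by auto
  ultimately show ?thesis using that by blast
qed

lemma NC2_subset_Pow: "\<pi> \<in> NC2 r \<Longrightarrow> \<pi> \<subseteq> Pow {..<r}"
  using NC2_memberD(2) by blast

lemma finite_NC2_member: "\<pi> \<in> NC2 r \<Longrightarrow> finite \<pi>"
  by (meson NC2_subset_Pow finite_Pow_iff finite_lessThan finite_subset)

lemma finite_NC2: "finite (NC2 r)"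
  by (rule finite_subset[of _ "Pow (Pow {..<r})"]) (use NC2_subset_Pow in auto)

lemma NC2_odd_empty:
  assumes "odd r"
  shows "NC2 r = {}"
proof (rule ccontr)
  assume "NC2 r \<noteq> {}"
  then obtain \<pi> where \<pi>: "\<pi> \<in> NC2 r" by blast
  have "finite B" if "B \<in> \<pi>" for B using NC2_memberD(1)[OF \<pi> that] card.infinite by fastforce
  then have "card (\<Union>\<pi>) = (\<Sum>B\<in>\<pi>. card B)"
    using finite_NC2_member[OF \<pi>] NC2_memberD(3)[OF \<pi>]
    by (intro card_Union_disjoint) (auto simp: pairwise_def disjnt_def)
  also have "\<dots> = 2 * card \<pi>" using NC2_memberD(1)[OF \<pi>] by simp
  finally show False using NC2_memberD(2)[OF \<pi>] assms by simp
qed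

definition shift_block :: "nat \<Rightarrow> nat set \<Rightarrow> nat set" where
  "shift_block k B = (+) k ` B"

definition unshift_block :: "nat \<Rightarrow> nat set \<Rightarrow> nat set" where
  "unshift_block k B = (\<lambda>x. x - k) ` B"

lemma shift_block_doubleton [simp]: "shift_block k {a, b} = {k + a, k + b}"
  by (simp add: shift_block_def)

lemma unshift_block_doubleton [simp]: "unshift_block k {a, b} = {a - k, b - k}"
  by (simp add: unshift_block_def)

lemma unshift_shift_block [simp]: "unshift_block k (shift_block k B) = B"
  by (auto simp: shift_block_def unshift_block_def image_iff)

lemma shift_unshift_block: "\<forall>x\<in>B. k \<le> x \<Longrightarrow> shift_block k (unshift_block k B) = B"
  by (auto simp: shift_block_def unshift_block_def image_iff)

lemma shift_unshift_blocks:
  "\<forall>x\<in>\<Union>\<rho>. k \<le> x \<Longrightarrow> shift_block k ` unshift_block k ` \<rho> = \<rho>"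
  by (simp add: image_comp shift_unshift_block cong: image_cong)

lemma inj_shift_block: "inj (shift_block k)"
  by (metis injI unshift_shift_block)

lemma Union_shift_block: "\<Union>(shift_block k ` \<sigma>) = (+) k ` \<Union>\<sigma>"
  by (auto simp: shift_block_def)

lemma image_add_lessThan: "(+) (k :: nat) ` {..<m} = {k..<k + m}"
proof safe
  fix x assume "x \<in> {k..<k + m}"
  then show "x \<in> (+) k ` {..<m}" by (intro image_eqI[of _ _ "x - k"]) auto
qed auto

text \<open>A non-crossing pairing of \<open>{0..n}\<close> is the same as a partner \<open>j + 1\<close> of \<open>0\<close> together with
  non-crossing pairings of the \<open>j\<close> points strictly between them and of the points after \<open>j + 1\<close>.\<close>

definition nc_join :: "nat \<Rightarrow> nat set set \<Rightarrow> nat set set \<Rightarrow> nat set set" where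
  "nc_join j \<sigma> \<tau> = insert {0, Suc j} (shift_block 1 ` \<sigma> \<union> shift_block (j + 2) ` \<tau>)"

lemma nc_join_cases:
  assumes "B \<in> nc_join j \<sigma> \<tau>" "\<sigma> \<in> NC2 j" "\<tau> \<in> NC2 m"
  obtains "B = {0, Suc j}"
   | a b where "a < b" "b < j" "{a, b} \<in> \<sigma>" "B = {1 + a, 1 + b}"
   | a b where "a < b" "b < m" "{a, b} \<in> \<tau>" "B = {j + 2 + a, j + 2 + b}"
proof -
  consider "B = {0, Suc j}" | "B \<in> shift_block 1 ` \<sigma>" | "B \<in> shift_block (j + 2) ` \<tau>"
    using assms(1) by (auto simp: nc_join_def)
  then show ?thesis
  proof cases
    case 2
    then obtain B' where "B' \<in> \<sigma>" "B = shift_block 1 B'" by auto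
    then show ?thesis using NC2_blockE[OF assms(2) \<open>B' \<in> \<sigma>\<close>] that(2) by (metis shift_block_doubleton)
  next
    case 3
    then obtain B' where "B' \<in> \<tau>" "B = shift_block (j + 2) B'" by auto
    then show ?thesis using NC2_blockE[OF assms(3) \<open>B' \<in> \<tau>\<close>] that(3) by (metis shift_block_doubleton)
  qed (use that(1) in blast)
qed

lemma nc_join_NC2:
  assumes "j < n" "\<sigma> \<in> NC2 j" "\<tau> \<in> NC2 (n - 1 - j)"
  shows "nc_join j \<sigma> \<tau> \<in> NC2 (Suc n)"
proof -
  note cases = nc_join_cases[OF _ assms(2,3)]
  have card: "\<forall>B\<in>nc_join j \<sigma> \<tau>. card B = 2"
    by (metis card_2_iff cases nat_neq_iff Zero_not_Suc add_left_cancel)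
  have "\<Union>(nc_join j \<sigma> \<tau>) = {0, Suc j} \<union> (+) 1 ` \<Union>\<sigma> \<union> (+) (j + 2) ` \<Union>\<tau>"
    by (simp add: nc_join_def Union_shift_block Un_assoc)
  also have "\<dots> = {..<Suc n}"
    unfolding NC2_memberD(2)[OF assms(2)] NC2_memberD(2)[OF assms(3)] image_add_lessThan
    using assms(1) by auto
  finally have union: "\<Union>(nc_join j \<sigma> \<tau>) = {..<Suc n}" .
  have disjoint: "B \<inter> C = {}" if B: "B \<in> nc_join j \<sigma> \<tau>" and C: "C \<in> nc_join j \<sigma> \<tau>"
    and "B \<noteq> C" for B C
  proof (rule cases[OF B]; rule cases[OF C])
    fix a b c d assume h: "{a, b} \<in> \<sigma>" "{c, d} \<in> \<sigma>" "B = {1 + a, 1 + b}" "C = {1 + c, 1 + d}"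
    then have "{a, b} \<noteq> {c, d}" using \<open>B \<noteq> C\<close> by auto
    then have "{a, b} \<inter> {c, d} = {}" using NC2_memberD(3)[OF assms(2) h(1,2)] by blast
    then show ?thesis using h(3,4) by (auto simp: disjoint_iff)
  next
    fix a b c d assume h: "{a, b} \<in> \<tau>" "{c, d} \<in> \<tau>" "B = {j + 2 + a, j + 2 + b}"
      "C = {j + 2 + c, j + 2 + d}"
    then have "{a, b} \<noteq> {c, d}" using \<open>B \<noteq> C\<close> by auto
    then have "{a, b} \<inter> {c, d} = {}" using NC2_memberD(3)[OF assms(3) h(1,2)] by blast
    then show ?thesis using h(3,4) by (auto simp: disjoint_iff)
  qed (use \<open>B \<noteq> C\<close> in auto)
  have noncrossing: "\<not> (Min B < Min C \<and> Min C < Max B \<and> Max B < Max C)"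
    if B: "B \<in> nc_join j \<sigma> \<tau>" and C: "C \<in> nc_join j \<sigma> \<tau>" for B C
  proof (rule cases[OF B]; rule cases[OF C])
    fix a b c d assume "a < b" "c < d" "{a, b} \<in> \<sigma>" "{c, d} \<in> \<sigma>" "B = {1 + a, 1 + b}" "C = {1 + c, 1 + d}"
    then show ?thesis using NC2_memberD(4)[OF assms(2), of "{a, b}" "{c, d}"] by auto
  next
    fix a b c d assume "a < b" "c < d" "{a, b} \<in> \<tau>" "{c, d} \<in> \<tau>" "B = {j + 2 + a, j + 2 + b}"
      "C = {j + 2 + c, j + 2 + d}"
    then show ?thesis using NC2_memberD(4)[OF assms(3), of "{a, b}" "{c, d}"] by auto
  qed auto
  show ?thesis using card union disjoint noncrossing by (simp add: NC2_def nc_pairing_def)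
qed

lemma unshift_NC2:
  assumes card: "\<forall>B\<in>\<rho>. card B = 2" and union: "\<Union>\<rho> = {k..<k + m}"
    and disjoint: "\<forall>B\<in>\<rho>. \<forall>C\<in>\<rho>. B \<noteq> C \<longrightarrow> B \<inter> C = {}"
    and noncrossing: "\<forall>B\<in>\<rho>. \<forall>C\<in>\<rho>. \<not> (Min B < Min C \<and> Min C < Max B \<and> Max B < Max C)"
  shows "unshift_block k ` \<rho> \<in> NC2 m"
proof -
  have ge: "k \<le> x" if "B \<in> \<rho>" "x \<in> B" for B x using union that by auto
  have block: "\<exists>a b. a < b \<and> k \<le> a \<and> B = {a, b}" if "B \<in> \<rho>" for B
    using card ge that by (metis card_2_nat_E insertI1)
  have "\<Union>(unshift_block k ` \<rho>) = (\<lambda>x. x - k) ` {k..<k + m}"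
    unfolding union[symmetric] by (auto simp: unshift_block_def)
  also have "\<dots> = {..<m}"
  proof safe
    fix x assume "x < m"
    then show "x \<in> (\<lambda>x. x - k) ` {k..<k + m}" by (intro image_eqI[of _ _ "x + k"]) auto
  qed auto
  finally have union': "\<Union>(unshift_block k ` \<rho>) = {..<m}" .
  have "card B' = 2 \<and> (\<forall>C'\<in>unshift_block k ` \<rho>. B' \<noteq> C' \<longrightarrow> B' \<inter> C' = {}) \<and>
      (\<forall>C'\<in>unshift_block k ` \<rho>. \<not> (Min B' < Min C' \<and> Min C' < Max B' \<and> Max B' < Max C'))"
    if "B' \<in> unshift_block k ` \<rho>" for B'
  proof (intro conjI ballI impI)
    obtain B where B: "B \<in> \<rho>" "B' = unshift_block k B" using \<open>B' \<in> _\<close> by auto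
    obtain a b where ab: "a < b" "k \<le> a" "B = {a, b}" using block B by blast
    show "card B' = 2" using B ab by auto
    fix C' assume "C' \<in> unshift_block k ` \<rho>"
    then obtain C where C: "C \<in> \<rho>" "C' = unshift_block k C" by auto
    obtain e f where ef: "e < f" "k \<le> e" "C = {e, f}" using block C by blast
    have "\<not> (a < e \<and> e < b \<and> b < f)" using noncrossing B C ab ef by force
    then show "\<not> (Min B' < Min C' \<and> Min C' < Max B' \<and> Max B' < Max C')" using B C ab ef by auto
    assume "B' \<noteq> C'"
    then have "B \<noteq> C" using B C by auto
    then have "B \<inter> C = {}" using disjoint B(1) C(1) by blast
    then have "a \<noteq> e" "a \<noteq> f" "b \<noteq> e" "b \<noteq> f" using ab ef by auto
    then show "B' \<inter> C' = {}" using B C ab ef by auto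
  qed
  then show ?thesis using union' by (simp add: NC2_def nc_pairing_def)
qed

lemma partner_0_unique:
  assumes "\<pi> \<in> NC2 r" "{0, q} \<in> \<pi>" "{0, q'} \<in> \<pi>"
  shows "q = q'"
proof -
  have "q \<noteq> 0" using NC2_memberD(1)[OF assms(1) assms(2)] by (cases "q = 0") auto
  have "q' \<noteq> 0" using NC2_memberD(1)[OF assms(1) assms(3)] by (cases "q' = 0") auto
  then show ?thesis using NC2_memberD(3)[OF assms] by (metis doubleton_eq_iff insert_disjoint(1) insertI1)
qed

lemma partner_0_exists:
  assumes "\<pi> \<in> NC2 (Suc n)"
  obtains q where "0 < q" "q \<le> n" "{0, q} \<in> \<pi>"
proof -
  have "0 \<in> \<Union>\<pi>" using NC2_memberD(2)[OF assms] by auto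
  then obtain B where "B \<in> \<pi>" "0 \<in> B" by auto
  moreover obtain a b where "a < b" "b < Suc n" "B = {a, b}" using NC2_blockE[OF assms \<open>B \<in> \<pi>\<close>] .
  ultimately show ?thesis using that[of b] by auto
qed

definition partner_0 :: "nat set set \<Rightarrow> nat" where
  "partner_0 \<pi> = (THE q. {0, q} \<in> \<pi>)"

lemma partner_0_eq: "\<pi> \<in> NC2 r \<Longrightarrow> {0, q} \<in> \<pi> \<Longrightarrow> partner_0 \<pi> = q"
  unfolding partner_0_def by (rule the_equality) (auto dest: partner_0_unique)

lemma NC2_block_outside_partner_0:
  assumes "\<pi> \<in> NC2 r" "{0, q} \<in> \<pi>" "C \<in> \<pi>" "C \<noteq> {0, q}"
  shows "(Max C < q \<or> q < Min C) \<and> 0 < Min C"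
proof -
  obtain c d where cd: "c < d" "C = {c, d}" using NC2_blockE[OF assms(1,3)] by metis
  have "{0, q} \<inter> C = {}" using NC2_memberD(3)[OF assms(1,2,3)] assms(4) by auto
  moreover have "q \<noteq> 0" using NC2_memberD(1)[OF assms(1,2)] by (cases "q = 0") auto
  moreover have "\<not> (Min {0, q} < Min C \<and> Min C < Max {0, q} \<and> Max {0, q} < Max C)"
    using NC2_memberD(4)[OF assms(1,2,3)] .
  ultimately show ?thesis using cd by auto
qed

definition nc_split :: "nat set set \<Rightarrow> nat \<times> nat set set \<times> nat set set" where
  "nc_split \<pi> = (partner_0 \<pi> - 1, unshift_block 1 ` {B\<in>\<pi>. Max B < partner_0 \<pi>},
     unshift_block (partner_0 \<pi> + 1) ` {B\<in>\<pi>. partner_0 \<pi> < Min B})"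

lemma nc_split_correct:
  assumes "\<pi> \<in> NC2 (Suc n)"
  shows "nc_split \<pi> \<in> (SIGMA j:{..<n}. NC2 j \<times> NC2 (n - 1 - j))"
    and "(case nc_split \<pi> of (j, \<sigma>, \<tau>) \<Rightarrow> nc_join j \<sigma> \<tau>) = \<pi>"
proof -
  obtain q where q: "0 < q" "q \<le> n" "{0, q} \<in> \<pi>" using partner_0_exists[OF assms] .
  have partner: "partner_0 \<pi> = q" using partner_0_eq[OF assms q(3)] .
  let ?inner = "{B\<in>\<pi>. Max B < q}" and ?outer = "{B\<in>\<pi>. q < Min B}"
  note outside = NC2_block_outside_partner_0[OF assms q(3)]
  have between: "Min C \<le> x \<and> x \<le> Max C" if "C \<in> \<pi>" "x \<in> C" for C x
    using NC2_blockE[OF assms that(1)] that(2) by (metis Max_ge Min_le finite.emptyI finite.insertI)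
  have block_of: "\<exists>C\<in>\<pi>. x \<in> C \<and> C \<noteq> {0, q}" if "x \<in> {1..n} - {q}" for x
    using NC2_memberD(2)[OF assms] that by auto
  have inner_union: "\<Union>?inner = {1..<1 + (q - 1)}"
  proof safe
    fix x C assume "x \<in> C" "C \<in> \<pi>" "Max C < q"
    then show "x \<in> {1..<1 + (q - 1)}" using outside[of C] between[of C x] q(3) by force
  next
    fix x assume x: "x \<in> {1..<1 + (q - 1)}"
    then obtain C where "C \<in> \<pi>" "x \<in> C" "C \<noteq> {0, q}" using block_of[of x] q by auto
    then show "x \<in> \<Union>?inner" using outside between x by fastforce
  qed
  have outer_union: "\<Union>?outer = {q + 1..<(q + 1) + (n - q)}"
  proof safe
    fix x C assume "x \<in> C" "C \<in> \<pi>" "q < Min C"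
    then show "x \<in> {q + 1..<(q + 1) + (n - q)}" using between[of C x] NC2_memberD(2)[OF assms] q by auto
  next
    fix x assume x: "x \<in> {q + 1..<(q + 1) + (n - q)}"
    then obtain C where "C \<in> \<pi>" "x \<in> C" "C \<noteq> {0, q}" using block_of[of x] q by auto
    then show "x \<in> \<Union>?outer" using outside between x by fastforce
  qed
  have "unshift_block 1 ` ?inner \<in> NC2 (q - 1)"
    using NC2_memberD[OF assms] by (intro unshift_NC2[OF _ inner_union]) auto
  moreover have "unshift_block (q + 1) ` ?outer \<in> NC2 (n - 1 - (q - 1))"
    using NC2_memberD[OF assms] q by (intro unshift_NC2) (auto simp: outer_union)
  ultimately show "nc_split \<pi> \<in> (SIGMA j:{..<n}. NC2 j \<times> NC2 (n - 1 - j))"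
    unfolding nc_split_def partner using q by auto
  have "\<pi> = insert {0, q} (?inner \<union> ?outer)" using outside q(3) by blast
  then show "(case nc_split \<pi> of (j, \<sigma>, \<tau>) \<Rightarrow> nc_join j \<sigma> \<tau>) = \<pi>"
    unfolding nc_split_def partner nc_join_def using q(1) inner_union outer_union
    by (simp add: shift_unshift_blocks Suc_diff_Suc)
qed

lemma nc_split_nc_join:
  assumes "j < n" "\<sigma> \<in> NC2 j" "\<tau> \<in> NC2 (n - 1 - j)"
  shows "nc_split (nc_join j \<sigma> \<tau>) = (j, \<sigma>, \<tau>)"
proof -
  have partner: "partner_0 (nc_join j \<sigma> \<tau>) = Suc j"
    by (rule partner_0_eq[OF nc_join_NC2[OF assms]]) (simp add: nc_join_def)
  note cases = nc_join_cases[OF _ assms(2,3)]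
  have inner: "{B\<in>nc_join j \<sigma> \<tau>. Max B < Suc j} = shift_block 1 ` \<sigma>"
  proof safe
    fix B assume B: "B \<in> nc_join j \<sigma> \<tau>" "Max B < Suc j"
    show "B \<in> shift_block 1 ` \<sigma>"
    proof (rule cases[OF B(1)])
      fix a b assume "{a, b} \<in> \<sigma>" "B = {1 + a, 1 + b}"
      then show ?thesis by (metis image_eqI shift_block_doubleton)
    qed (use B(2) in auto)
  next
    fix B assume "B \<in> \<sigma>"
    then show "shift_block 1 B \<in> nc_join j \<sigma> \<tau>" by (simp add: nc_join_def)
    from \<open>B \<in> \<sigma>\<close> show "Max (shift_block 1 B) < Suc j" by (elim NC2_blockE[OF assms(2)]) simp
  qed
  have outer: "{B\<in>nc_join j \<sigma> \<tau>. Suc j < Min B} = shift_block (j + 2) ` \<tau>"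
  proof safe
    fix B assume B: "B \<in> nc_join j \<sigma> \<tau>" "Suc j < Min B"
    show "B \<in> shift_block (j + 2) ` \<tau>"
    proof (rule cases[OF B(1)])
      fix a b assume "{a, b} \<in> \<tau>" "B = {j + 2 + a, j + 2 + b}"
      then show ?thesis by (metis image_eqI shift_block_doubleton)
    qed (use B(2) in auto)
  next
    fix B assume "B \<in> \<tau>"
    then show "shift_block (j + 2) B \<in> nc_join j \<sigma> \<tau>" by (simp add: nc_join_def)
    from \<open>B \<in> \<tau>\<close> show "Suc j < Min (shift_block (j + 2) B)" by (elim NC2_blockE[OF assms(3)]) simp
  qed
  show ?thesis unfolding nc_split_def partner inner
    using outer by (simp add: image_comp numeral_2_eq_2)
qed

lemma prod_shift_blocks:
  assumes "\<sigma> \<in> NC2 r"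
  shows "(\<Prod>B\<in>shift_block k ` \<sigma>. f (Min B) (Max B)) = (\<Prod>B\<in>\<sigma>. f (k + Min B) (k + Max B))"
proof -
  have "(\<Prod>B\<in>shift_block k ` \<sigma>. f (Min B) (Max B)) = (\<Prod>B\<in>\<sigma>. f (Min (shift_block k B)) (Max (shift_block k B)))"
    by (subst prod.reindex) (auto intro: inj_on_subset[OF inj_shift_block])
  also have "\<dots> = (\<Prod>B\<in>\<sigma>. f (k + Min B) (k + Max B))"
    by (rule prod.cong[OF refl]) (elim NC2_blockE[OF assms], simp)
  finally show ?thesis .
qed

lemma prod_nc_join:
  assumes "\<sigma> \<in> NC2 j" "\<tau> \<in> NC2 m"
  shows "(\<Prod>B\<in>nc_join j \<sigma> \<tau>. f (Min B) (Max B)) = f 0 (Suc j)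
    * (\<Prod>B\<in>\<sigma>. f (1 + Min B) (1 + Max B)) * (\<Prod>B\<in>\<tau>. f (j + 2 + Min B) (j + 2 + Max B))"
proof -
  have "shift_block 1 ` \<sigma> \<inter> shift_block (j + 2) ` \<tau> = {}"
  proof (rule ccontr)
    assume "shift_block 1 ` \<sigma> \<inter> shift_block (j + 2) ` \<tau> \<noteq> {}"
    then obtain B C where "B \<in> \<sigma>" "C \<in> \<tau>" "shift_block 1 B = shift_block (j + 2) C" by auto
    moreover obtain a b where "a < b" "b < j" "B = {a, b}" using NC2_blockE[OF assms(1) \<open>B \<in> \<sigma>\<close>] by metis
    moreover obtain c d where "C = {c, d}" using NC2_blockE[OF assms(2) \<open>C \<in> \<tau>\<close>] by metis
    ultimately show False by (auto simp: doubleton_eq_iff)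
  qed
  moreover have "{0, Suc j} \<notin> shift_block 1 ` \<sigma> \<union> shift_block (j + 2) ` \<tau>"
  proof
    assume "{0, Suc j} \<in> shift_block 1 ` \<sigma> \<union> shift_block (j + 2) ` \<tau>"
    then obtain B where "0 \<in> shift_block 1 B \<or> 0 \<in> shift_block (j + 2) B" by (metis UnE imageE insertI1)
    then show False by (auto simp: shift_block_def)
  qed
  ultimately have "(\<Prod>B\<in>nc_join j \<sigma> \<tau>. f (Min B) (Max B)) = f 0 (Suc j)
      * (\<Prod>B\<in>shift_block 1 ` \<sigma>. f (Min B) (Max B)) * (\<Prod>B\<in>shift_block (j + 2) ` \<tau>. f (Min B) (Max B))"
    using finite_NC2_member[OF assms(1)] finite_NC2_member[OF assms(2)]
    by (simp add: nc_join_def prod.union_disjoint mult.assoc)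
  then show ?thesis by (simp only: prod_shift_blocks[OF assms(1)] prod_shift_blocks[OF assms(2)])
qed

lemma sum_NC2_Suc:
  fixes f :: "nat \<Rightarrow> nat \<Rightarrow> 'b::comm_ring_1"
  shows "(\<Sum>\<pi>\<in>NC2 (Suc n). \<Prod>B\<in>\<pi>. f (Min B) (Max B)) =
    (\<Sum>j<n. f 0 (Suc j) * (\<Sum>\<sigma>\<in>NC2 j. \<Prod>B\<in>\<sigma>. f (1 + Min B) (1 + Max B))
                        * (\<Sum>\<tau>\<in>NC2 (n - 1 - j). \<Prod>B\<in>\<tau>. f (j + 2 + Min B) (j + 2 + Max B)))"
proof -
  let ?S = "SIGMA j:{..<n}. NC2 j \<times> NC2 (n - 1 - j)"
  have "(\<Sum>\<pi>\<in>NC2 (Suc n). \<Prod>B\<in>\<pi>. f (Min B) (Max B))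
      = (\<Sum>(j, \<sigma>, \<tau>)\<in>?S. \<Prod>B\<in>nc_join j \<sigma> \<tau>. f (Min B) (Max B))"
  proof (rule sum.reindex_bij_witness[where j = nc_split and i = "\<lambda>(j, \<sigma>, \<tau>). nc_join j \<sigma> \<tau>"])
    fix \<pi> assume \<pi>: "\<pi> \<in> NC2 (Suc n)"
    show "nc_split \<pi> \<in> ?S" using nc_split_correct(1)[OF \<pi>] .
    show "(case nc_split \<pi> of (j, \<sigma>, \<tau>) \<Rightarrow> nc_join j \<sigma> \<tau>) = \<pi>"
      using nc_split_correct(2)[OF \<pi>] .
    then show "(case nc_split \<pi> of (j, \<sigma>, \<tau>) \<Rightarrow> \<Prod>B\<in>nc_join j \<sigma> \<tau>. f (Min B) (Max B))
        = (\<Prod>B\<in>\<pi>. f (Min B) (Max B))"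
      by (simp add: case_prod_beta)
  next
    fix x assume "x \<in> ?S"
    then show "nc_split (case x of (j, \<sigma>, \<tau>) \<Rightarrow> nc_join j \<sigma> \<tau>) = x"
      "(case x of (j, \<sigma>, \<tau>) \<Rightarrow> nc_join j \<sigma> \<tau>) \<in> NC2 (Suc n)"
      using nc_split_nc_join nc_join_NC2 by (auto split: prod.splits)
  qed
  also have "\<dots> = (\<Sum>(j, \<sigma>, \<tau>)\<in>?S. f 0 (Suc j) * (\<Prod>B\<in>\<sigma>. f (1 + Min B) (1 + Max B))
      * (\<Prod>B\<in>\<tau>. f (j + 2 + Min B) (j + 2 + Max B)))"
    by (rule sum.cong[OF refl]) (auto simp only: mem_Sigma_iff prod_nc_join split: prod.splits)
  also have "\<dots> = (\<Sum>j<n. \<Sum>(\<sigma>, \<tau>)\<in>NC2 j \<times> NC2 (n - 1 - j). f 0 (Suc j)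
      * (\<Prod>B\<in>\<sigma>. f (1 + Min B) (1 + Max B)) * (\<Prod>B\<in>\<tau>. f (j + 2 + Min B) (j + 2 + Max B)))"
    by (subst sum.Sigma) (auto simp: finite_NC2)
  also have "\<dots> = (\<Sum>j<n. f 0 (Suc j) * (\<Sum>\<sigma>\<in>NC2 j. \<Prod>B\<in>\<sigma>. f (1 + Min B) (1 + Max B))
                        * (\<Sum>\<tau>\<in>NC2 (n - 1 - j). \<Prod>B\<in>\<tau>. f (j + 2 + Min B) (j + 2 + Max B)))"
    by (simp add: sum.cartesian_product[symmetric] sum_distrib_left[symmetric]
        sum_distrib_right[symmetric] mult.assoc)
  finally show ?thesis .
qed

section \<open>Tracial states on \<open>*\<close>-algebras\<close>

locale tracial_star_algebra =
  fixes sc :: "complex \<Rightarrow> 'a::real_algebra_1 \<Rightarrow> 'a"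
    and st :: "'a \<Rightarrow> 'a" and phi :: "'a \<Rightarrow> complex"
  assumes sc_of_real: "sc (complex_of_real r) x = r *\<^sub>R x"
    and sc_add_right: "sc c (x + y) = sc c x + sc c y"
    and sc_sc: "sc c (sc d x) = sc (c * d) x"
    and sc_mult_left: "sc c x * y = sc c (x * y)"
    and sc_mult_right: "x * sc c y = sc c (x * y)"
    and st_add: "st (x + y) = st x + st y"
    and st_sc: "st (sc c x) = sc (cnj c) (st x)"
    and st_mult: "st (x * y) = st y * st x"
    and st_st [simp]: "st (st x) = x"
    and phi_add: "phi (x + y) = phi x + phi y"
    and phi_sc: "phi (sc c x) = c * phi x"
    and phi_one [simp]: "phi 1 = 1"
    and phi_commute: "phi (x * y) = phi (y * x)"
    and phi_st_mult_self_real: "Im (phi (st x * x)) = 0"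

lemma tracial_star_algebra_if_nc_prob_space:
  "nc_prob_space sc st phi \<Longrightarrow> tracial_star_algebra sc st phi"
  unfolding nc_prob_space_def tracial_star_algebra_def by (simp, metis)

context tracial_star_algebra
begin

lemma sc_one [simp]: "sc 1 x = x"
  using sc_of_real[of 1 x] by simp

lemma st_one [simp]: "st 1 = 1"
  using st_mult[of "st 1" 1] by simp

lemma st_zero [simp]: "st 0 = 0"
  using st_add[of 0 0] by simp

lemma phi_zero [simp]: "phi 0 = 0"
  using phi_add[of 0 0] by simp

lemma st_scaleR: "st (r *\<^sub>R x) = r *\<^sub>R st x"
  using st_sc[of "complex_of_real r" x] by (simp add: sc_of_real)

lemma phi_scaleR: "phi (r *\<^sub>R x) = complex_of_real r * phi x"
  using phi_sc[of "complex_of_real r" x] by (simp add: sc_of_real)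

lemma st_diff: "st (x - y) = st x - st y"
  using st_add[of x "- y"] st_scaleR[of "-1" y] by simp

lemma phi_diff: "phi (x - y) = phi x - phi y"
  using phi_add[of x "- y"] phi_scaleR[of "-1" y] by simp

text \<open>Apply the reality of \<open>\<phi>(z\<^sup>* z)\<close> to \<open>z = x + 1\<close> and \<open>z = x + i\<close>.\<close>

lemma phi_st: "phi (st x) = cnj (phi x)"
proof -
  have "st (x + 1) * (x + 1) = st x * x + st x + x + 1"
    by (simp add: st_add algebra_simps)
  then have "Im (phi (st x)) + Im (phi x) = 0"
    using phi_st_mult_self_real[of "x + 1"] phi_st_mult_self_real[of x] by (simp add: phi_add)
  moreover have "st (x + sc \<i> 1) * (x + sc \<i> 1) = st x * x + sc \<i> (st x) + sc (- \<i>) x + 1"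
    by (simp add: st_add st_sc sc_mult_left sc_mult_right sc_sc sc_add_right algebra_simps)
  then have "Re (phi (st x)) - Re (phi x) = 0"
    using phi_st_mult_self_real[of "x + sc \<i> 1"] phi_st_mult_self_real[of x] by (simp add: phi_add phi_sc)
  ultimately show ?thesis by (simp add: complex_eq_iff)
qed

end

section \<open>First-moment recursion\<close>

fun splits :: "'b list \<Rightarrow> ('b list \<times> 'b \<times> 'b list) list" where
  "splits [] = []"
| "splits (x # xs) = ([], x, xs) # map (\<lambda>(u, y, v). (x # u, y, v)) (splits xs)"

lemma splits_eq_nth: "splits l = map (\<lambda>j. (take j l, l ! j, drop (Suc j) l)) [0..<length l]"
proof (induct l)
  case (Cons x l)
  have "[0..<length (x # l)] = 0 # map Suc [0..<length l]"
    by (simp only: length_Cons upt_conv_Cons[OF zero_less_Suc] map_Suc_upt)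
  then show ?case using Cons by simp
qed simp

lemma mem_splitsD: "(u, y, v) \<in> set (splits l) \<Longrightarrow> l = u @ y # v"
  by (induct l arbitrary: u) auto

lemma splits_append:
  "splits (a @ b) = map (\<lambda>(u, y, v). (u, y, v @ b)) (splits a) @ map (\<lambda>(u, y, v). (a @ u, y, v)) (splits b)"
  by (induct a) (auto simp: case_prod_unfold)

lemma splits_append_Cons:
  "splits (a @ x # b) = map (\<lambda>(u, y, v). (u, y, v @ x # b)) (splits a)
     @ (a, x, b) # map (\<lambda>(u, y, v). (a @ x # u, y, v)) (splits b)"
  by (simp add: splits_append case_prod_unfold)

lemma splits_map: "splits (map f l) = map (\<lambda>(u, y, v). (map f u, f y, map f v)) (splits l)"
  by (induct l) (auto simp: case_prod_unfold)

lemma splits_rev: "splits (rev a) = rev (map (\<lambda>(u, y, v). (rev v, y, rev u)) (splits a))"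
  by (induct a) (auto simp: splits_append case_prod_unfold rev_map)

lemma sum_list_swap:
  "(\<Sum>x\<leftarrow>xs. \<Sum>y\<leftarrow>ys. f x y) = (\<Sum>y\<leftarrow>ys. \<Sum>x\<leftarrow>xs. (f x y :: 'b::comm_monoid_add))"
  by (induct xs) (simp_all add: sum_list_addf)

lemma sum_list_map_concat: "sum_list (map f (concat xss)) = (\<Sum>xs\<leftarrow>xss. sum_list (map f xs))"
  by (induct xss) simp_all

lemma sum_list_concat: "sum_list (concat xss) = (\<Sum>xs\<leftarrow>xss. sum_list xs)"
  by (induct xss) simp_all

definition lincomb :: "(real \<Rightarrow> 'b::real_vector) \<Rightarrow> (real \<times> real) list \<Rightarrow> 'b" where
  "lincomb X L = (\<Sum>(r, t)\<leftarrow>L. r *\<^sub>R X t)"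

definition step_points :: "stepfn \<Rightarrow> (real \<times> real) list" where
  "step_points h = concat (map (\<lambda>(\<alpha>, a, b). [(\<alpha>, b), (- \<alpha>, a)]) h)"

lemma Xh_eq_lincomb: "Xh X h = lincomb X (step_points h)"
  by (induct h) (auto simp: Xh_def lincomb_def step_points_def scaleR_diff_right)

lemma step_points_in: "step_in T h \<Longrightarrow> set (map snd (step_points h)) \<subseteq> {0..T}"
  by (induct h) (auto simp: step_in_def step_points_def)

definition multilinear :: "('b::real_vector list \<Rightarrow> complex) \<Rightarrow> bool" where
  "multilinear F \<longleftrightarrow>
     (\<forall>ws us x y. F (ws @ (x + y) # us) = F (ws @ x # us) + F (ws @ y # us)) \<and>
     (\<forall>ws us r x. F (ws @ (r *\<^sub>R x) # us) = complex_of_real r * F (ws @ x # us))"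

lemma multilinear_lincomb:
  assumes "multilinear F"
  shows "F (ws @ lincomb X L # us) = (\<Sum>(r, t)\<leftarrow>L. complex_of_real r * F (ws @ X t # us))"
proof (induct L)
  case Nil
  have "F (ws @ ((0::real) *\<^sub>R 0) # us) = complex_of_real 0 * F (ws @ 0 # us)"
    using assms unfolding multilinear_def by blast
  then show ?case by (simp add: lincomb_def)
next
  case (Cons p L)
  then show ?case using assms unfolding multilinear_def by (cases p) (simp add: lincomb_def)
qed

lemma multilinear_eq_on_lincombs:
  assumes "multilinear F" "multilinear G" "\<And>ts. set ts \<subseteq> A \<Longrightarrow> F (map X ts) = G (map X ts)"
    and "set ts \<subseteq> A" "\<forall>L\<in>set Ls. set (map snd L) \<subseteq> A"
  shows "F (map X ts @ map (lincomb X) Ls) = G (map X ts @ map (lincomb X) Ls)"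
  using assms(4,5)
proof (induct Ls arbitrary: ts)
  case (Cons L Ls)
  have "F (map X ts @ X (snd p) # map (lincomb X) Ls) = G (map X ts @ X (snd p) # map (lincomb X) Ls)"
    if "p \<in> set L" for p
    using Cons.hyps[of "ts @ [snd p]"] Cons.prems that by force
  then show ?case
    by (simp add: multilinear_lincomb[OF assms(1)] multilinear_lincomb[OF assms(2)] case_prod_unfold
        cong: map_cong)
qed (use assms(3) in simp)

context tracial_star_algebra
begin

definition moment_expansion :: "'a list \<Rightarrow> complex" where
  "moment_expansion l = (case l of [] \<Rightarrow> 1 | x # ws \<Rightarrow>
     (\<Sum>(u, y, v)\<leftarrow>splits ws. phi (x * y) * (phi (prod_list u) * phi (prod_list v))))"

lemma phi_prod_list_add:
  "phi (prod_list (a @ (x + y) # b)) = phi (prod_list (a @ x # b)) + phi (prod_list (a @ y # b))"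
  by (simp add: algebra_simps phi_add)

lemma phi_prod_list_scaleR:
  "phi (prod_list (a @ (r *\<^sub>R x) # b)) = complex_of_real r * phi (prod_list (a @ x # b))"
  by (simp add: phi_scaleR[symmetric])

lemma multilinear_phi_prod_list: "multilinear (\<lambda>l. phi (prod_list l))"
  unfolding multilinear_def using phi_prod_list_add phi_prod_list_scaleR by blast

lemma moment_expansion_Cons_append_Cons:
  "moment_expansion (w # ws @ z # us) =
     (\<Sum>p\<leftarrow>splits ws. phi (w * fst (snd p)) * phi (prod_list (fst p)) * phi (prod_list (snd (snd p) @ z # us)))
   + phi (w * z) * (phi (prod_list ws) * phi (prod_list us))
   + (\<Sum>p\<leftarrow>splits us. phi (w * fst (snd p)) * phi (prod_list (snd (snd p))) * phi (prod_list (ws @ z # fst p)))"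
  by (simp add: moment_expansion_def splits_append_Cons o_def case_prod_unfold mult_ac)

lemma moment_expansion_Cons:
  "moment_expansion (z # us) =
     (\<Sum>p\<leftarrow>splits us. phi (z * fst (snd p)) * (phi (prod_list (fst p)) * phi (prod_list (snd (snd p)))))"
  by (simp add: moment_expansion_def case_prod_unfold)

lemma multilinear_moment_expansion: "multilinear moment_expansion"
  unfolding multilinear_def
proof (intro conjI allI)
  fix ws us x y
  show "moment_expansion (ws @ (x + y) # us) = moment_expansion (ws @ x # us) + moment_expansion (ws @ y # us)"
  proof (cases ws)
    case Nil
    then show ?thesis by (simp add: moment_expansion_Cons distrib_right phi_add sum_list_addf)
  next
    case (Cons w ws')
    then show ?thesis
      by (simp only: append_Cons moment_expansion_Cons_append_Cons)
        (simp add: phi_prod_list_add algebra_simps phi_add sum_list_addf)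
  qed
next
  fix ws us r x
  show "moment_expansion (ws @ (r *\<^sub>R x) # us) = complex_of_real r * moment_expansion (ws @ x # us)"
  proof (cases ws)
    case Nil
    then show ?thesis
      by (simp add: moment_expansion_Cons phi_scaleR sum_list_const_mult[symmetric] mult_ac)
  next
    case (Cons w ws')
    then show ?thesis
      by (simp only: append_Cons moment_expansion_Cons_append_Cons)
        (simp add: phi_scaleR sum_list_const_mult[symmetric] algebra_simps)
  qed
qed

end

locale semicircular = tracial_star_algebra sc st phi
  for sc :: "complex \<Rightarrow> 'a::{real_normed_algebra_1,banach} \<Rightarrow> 'a" and st phi +
  fixes T :: real and X :: "real \<Rightarrow> 'a"
  assumes semicircular_process: "semicircular_process st phi T X"
begin

lemma free_wick:
  assumes "set l \<subseteq> {0..T}"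
  shows "phi (prod_list (map X l)) = (\<Sum>\<pi>\<in>NC2 (length l). \<Prod>B\<in>\<pi>. phi (X (l ! Min B) * X (l ! Max B)))"
  using semicircular_process assms NC2_odd_empty[of "length l"]
  unfolding semicircular_process_def by (cases "even (length l)") auto

lemma free_wick_shifted:
  assumes "set l \<subseteq> {0..T}" "\<And>i. i < length l \<Longrightarrow> l ! i = l' ! (k + i)"
  shows "phi (prod_list (map X l)) = (\<Sum>\<pi>\<in>NC2 (length l). \<Prod>B\<in>\<pi>. phi (X (l' ! (k + Min B)) * X (l' ! (k + Max B))))"
  unfolding free_wick[OF assms(1)]
  by (intro sum.cong prod.cong refl) (auto elim!: NC2_blockE simp: assms(2))

lemma moment_recursion_points:
  assumes "set (t # ts) \<subseteq> {0..T}"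
  shows "phi (prod_list (map X (t # ts))) = moment_expansion (map X (t # ts))"
proof -
  define l where "l = t # ts"
  define f where "f p q = phi (X (l ! p) * X (l ! q))" for p q
  have "phi (prod_list (map X l)) = (\<Sum>\<pi>\<in>NC2 (Suc (length ts)). \<Prod>B\<in>\<pi>. f (Min B) (Max B))"
    using free_wick[OF assms] by (simp add: f_def l_def)
  also have "\<dots> = (\<Sum>j<length ts. phi (X t * X (ts ! j))
      * (phi (prod_list (map X (take j ts))) * phi (prod_list (map X (drop (Suc j) ts)))))"
  proof (subst sum_NC2_Suc, intro sum.cong refl)
    fix j assume j: "j \<in> {..<length ts}"
    have "phi (prod_list (map X (take j ts)))
        = (\<Sum>\<sigma>\<in>NC2 j. \<Prod>B\<in>\<sigma>. phi (X (ts ! (0 + Min B)) * X (ts ! (0 + Max B))))"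
      using assms j by (subst free_wick_shifted[where l' = ts and k = 0]) (auto dest: in_set_takeD)
    moreover have "phi (prod_list (map X (drop (Suc j) ts)))
        = (\<Sum>\<tau>\<in>NC2 (length ts - 1 - j). \<Prod>B\<in>\<tau>. phi (X (ts ! (Suc j + Min B)) * X (ts ! (Suc j + Max B))))"
      using assms j by (subst free_wick_shifted[where l' = ts and k = "Suc j"]) (auto dest: in_set_dropD)
    ultimately show "f 0 (Suc j) * (\<Sum>\<sigma>\<in>NC2 j. \<Prod>B\<in>\<sigma>. f (1 + Min B) (1 + Max B))
        * (\<Sum>\<tau>\<in>NC2 (length ts - 1 - j). \<Prod>B\<in>\<tau>. f (j + 2 + Min B) (j + 2 + Max B))
      = phi (X t * X (ts ! j)) * (phi (prod_list (map X (take j ts))) * phi (prod_list (map X (drop (Suc j) ts))))"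
      by (simp add: f_def l_def mult.assoc)
  qed
  also have "\<dots> = moment_expansion (map X l)"
    by (simp add: moment_expansion_def l_def splits_map splits_eq_nth case_prod_unfold
        interv_sum_list_conv_sum_set_nat atLeast0LessThan take_map drop_map)
  finally show ?thesis unfolding l_def .
qed

definition monomial :: "stepfn list \<Rightarrow> 'a" where
  "monomial hs = prod_list (map (Xh X) hs)"

lemma moment_recursion:
  assumes "step_in T h" "\<forall>g\<in>set hs. step_in T g"
  shows "phi (Xh X h * monomial hs) = (\<Sum>(u, y, v)\<leftarrow>splits hs.
     phi (Xh X h * Xh X y) * (phi (monomial u) * phi (monomial v)))"
proof -
  have on_points: "phi (prod_list (map X ts)) = moment_expansion (map X ts)" if "set ts \<subseteq> {0..T}" for ts
    using moment_recursion_points that by (cases ts) (simp_all add: moment_expansion_def)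
  have "phi (prod_list (map (lincomb X) (map step_points (h # hs))))
      = moment_expansion (map (lincomb X) (map step_points (h # hs)))"
    using multilinear_eq_on_lincombs[OF multilinear_phi_prod_list multilinear_moment_expansion on_points,
        where ts = "[]" and Ls = "map step_points (h # hs)"] assms step_points_in by auto
  then show ?thesis
    by (simp add: Xh_eq_lincomb[abs_def] moment_expansion_def monomial_def splits_map case_prod_unfold o_def)
qed

section \<open>Duality between the derivative and the divergence\<close>

lemma monomial_append: "monomial (a @ b) = monomial a * monomial b"
  by (simp add: monomial_def)

lemma evalX_monomial: "evalX sc X P = (\<Sum>(c, hs)\<leftarrow>P. sc c (monomial hs))"
  by (simp add: evalX_def monomial_def)

lemma st_Xh: "step_in T h \<Longrightarrow> st (Xh X h) = Xh X h"
proof (induct h)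
  case (Cons p h)
  obtain \<alpha> a b where "p = (\<alpha>, a, b)" by (cases p)
  moreover have "st (X t) = X t" if "t \<in> {0..T}" for t
    using semicircular_process that unfolding semicircular_process_def by blast
  ultimately show ?case using Cons by (auto simp: Xh_def step_in_def st_add st_scaleR st_diff)
qed (simp add: Xh_def)

lemma st_monomial: "\<forall>g\<in>set l. step_in T g \<Longrightarrow> st (monomial l) = monomial (rev l)"
  by (induct l) (simp_all add: monomial_def st_mult st_Xh)

lemma cnj_phi_monomial: "\<forall>g\<in>set l. step_in T g \<Longrightarrow> cnj (phi (monomial l)) = phi (monomial (rev l))"
  by (simp add: phi_st[symmetric] st_monomial)

lemma cnj_ipH: "step_in T y \<Longrightarrow> step_in T h \<Longrightarrow> cnj (ipH phi X y h) = phi (Xh X h * Xh X y)"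
  by (simp add: ipH_def phi_st[symmetric] st_mult st_Xh)

definition dual :: "stepfn list \<Rightarrow> 'a \<Rightarrow> complex" where
  "dual ys x = phi (monomial ys * st x)"

lemma dual_zero [simp]: "dual ys 0 = 0"
  by (simp add: dual_def)

lemma dual_add: "dual ys (x + y) = dual ys x + dual ys y"
  by (simp add: dual_def st_add distrib_left phi_add)

lemma dual_diff: "dual ys (x - y) = dual ys x - dual ys y"
  by (simp add: dual_def st_diff right_diff_distrib phi_diff)

lemma dual_sc: "dual ys (sc c x) = cnj c * dual ys x"
  by (simp add: dual_def st_sc sc_mult_right phi_sc)

lemma dual_sum_list: "dual ys (\<Sum>x\<leftarrow>xs. f x) = (\<Sum>x\<leftarrow>xs. dual ys (f x))"
  by (induct xs) (simp_all add: dual_add)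

lemma dual_evalX_left: "dual ys (evalX sc X P * z) = (\<Sum>(c, as)\<leftarrow>P. cnj c * dual ys (monomial as * z))"
  by (induct P) (auto simp: evalX_monomial distrib_right dual_add dual_sc sc_mult_left)

lemma dual_evalX_right: "dual ys (z * evalX sc X P) = (\<Sum>(c, bs)\<leftarrow>P. cnj c * dual ys (z * monomial bs))"
  by (induct P) (auto simp: evalX_monomial distrib_left dual_add dual_sc sc_mult_right)

definition contractions_left :: "stepfn list \<Rightarrow> stepfn list \<Rightarrow> stepfn list \<Rightarrow> stepfn \<Rightarrow> complex" where
  "contractions_left ys as bs h = (\<Sum>(u, y, v)\<leftarrow>splits as.
     cnj (phi (monomial v) * ipH phi X y h) * dual ys (monomial u * monomial bs))"

definition contractions_right :: "stepfn list \<Rightarrow> stepfn list \<Rightarrow> stepfn list \<Rightarrow> stepfn \<Rightarrow> complex" where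
  "contractions_right ys as bs h = (\<Sum>(u, y, v)\<leftarrow>splits bs.
     cnj (phi (monomial u) * ipH phi X y h) * dual ys (monomial as * monomial v))"

definition contractions_Y :: "stepfn list \<Rightarrow> stepfn list \<Rightarrow> stepfn list \<Rightarrow> stepfn \<Rightarrow> complex" where
  "contractions_Y ys as bs h = (\<Sum>(u, y, v)\<leftarrow>splits ys.
     ipH phi X y h * (phi (monomial u * monomial (rev as)) * phi (monomial v * monomial (rev bs))))"

lemma monomial_duality:
  assumes h: "step_in T h" and steps: "\<forall>g\<in>set (ys @ as @ bs). step_in T g"
  shows "dual ys (monomial as * Xh X h * monomial bs)
     - contractions_left ys as bs h - contractions_right ys as bs h = contractions_Y ys as bs h"
proof -
  let ?w = "rev as @ ys @ rev bs"
  have "dual ys (monomial as * Xh X h * monomial bs)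
      = phi ((monomial ys * monomial (rev bs)) * (Xh X h * monomial (rev as)))"
    using steps h by (simp add: dual_def st_mult st_monomial st_Xh mult.assoc)
  also have "\<dots> = phi (Xh X h * monomial ?w)"
    by (subst phi_commute) (simp add: monomial_append mult.assoc)
  also have "\<dots> = (\<Sum>(u, y, v)\<leftarrow>splits ?w. phi (Xh X h * Xh X y) * (phi (monomial u) * phi (monomial v)))"
    using steps by (intro moment_recursion[OF h]) auto
  also have "\<dots> = (\<Sum>(u, y, v)\<leftarrow>splits as.
         phi (Xh X h * Xh X y) * (phi (monomial (rev v)) * phi (monomial (rev u @ ys @ rev bs))))
     + (\<Sum>(u, y, v)\<leftarrow>splits ys.
         phi (Xh X h * Xh X y) * (phi (monomial (rev as @ u)) * phi (monomial (v @ rev bs))))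
     + (\<Sum>(u, y, v)\<leftarrow>splits bs.
         phi (Xh X h * Xh X y) * (phi (monomial (rev as @ ys @ rev v)) * phi (monomial (rev u))))"
    by (simp add: splits_append splits_rev case_prod_unfold o_def rev_map[symmetric] add.assoc)
  finally have expansion: "dual ys (monomial as * Xh X h * monomial bs) = \<dots>" .
  have "contractions_left ys as bs h = (\<Sum>(u, y, v)\<leftarrow>splits as.
      phi (Xh X h * Xh X y) * (phi (monomial (rev v)) * phi (monomial (rev u @ ys @ rev bs))))"
    unfolding contractions_left_def
  proof (intro arg_cong[where f = sum_list] map_cong refl, clarify)
    fix u y v assume "(u, y, v) \<in> set (splits as)"
    then have "as = u @ y # v" by (rule mem_splitsD)
    then have g: "\<forall>g\<in>set (u @ v @ bs). step_in T g" "step_in T y" using steps by auto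
    have "dual ys (monomial u * monomial bs) = phi (monomial (rev u) * (monomial ys * monomial (rev bs)))"
      using g by (simp add: dual_def st_mult st_monomial) (subst phi_commute, simp add: mult.assoc)
    then show "cnj (phi (monomial v) * ipH phi X y h) * dual ys (monomial u * monomial bs) =
       phi (Xh X h * Xh X y) * (phi (monomial (rev v)) * phi (monomial (rev u @ ys @ rev bs)))"
      using g h by (simp add: cnj_phi_monomial cnj_ipH monomial_append)
  qed
  moreover have "contractions_right ys as bs h = (\<Sum>(u, y, v)\<leftarrow>splits bs.
      phi (Xh X h * Xh X y) * (phi (monomial (rev as @ ys @ rev v)) * phi (monomial (rev u))))"
    unfolding contractions_right_def
  proof (intro arg_cong[where f = sum_list] map_cong refl, clarify)
    fix u y v assume "(u, y, v) \<in> set (splits bs)"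
    then have "bs = u @ y # v" by (rule mem_splitsD)
    then have g: "\<forall>g\<in>set (u @ v @ as). step_in T g" "step_in T y" using steps by auto
    have "dual ys (monomial as * monomial v) = phi (monomial (rev as) * (monomial ys * monomial (rev v)))"
      using g by (simp add: dual_def st_mult st_monomial) (subst phi_commute, simp add: mult.assoc)
    then show "cnj (phi (monomial u) * ipH phi X y h) * dual ys (monomial as * monomial v) =
       phi (Xh X h * Xh X y) * (phi (monomial (rev as @ ys @ rev v)) * phi (monomial (rev u)))"
      using g h by (simp add: cnj_phi_monomial cnj_ipH monomial_append mult_ac)
  qed
  moreover have "contractions_Y ys as bs h = (\<Sum>(u, y, v)\<leftarrow>splits ys.
      phi (Xh X h * Xh X y) * (phi (monomial (rev as @ u)) * phi (monomial (v @ rev bs))))"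
    by (simp add: contractions_Y_def ipH_def phi_commute[of "Xh X h"] monomial_append
        phi_commute[of "monomial (rev as)"])
  ultimately show ?thesis using expansion by simp
qed


lemma DX_eq_splits: "DX sc X P = concat (map (\<lambda>(c, hs).
    map (\<lambda>(u, y, v). ([(sc c (monomial u), monomial v)], y)) (splits hs)) P)"
  unfolding DX_def
  by (intro arg_cong[where f = concat] map_cong refl) (auto simp: splits_eq_nth monomial_def take_map drop_map)

definition correction_left :: "polyX \<Rightarrow> 'a \<Rightarrow> stepfn \<Rightarrow> 'a" where
  "correction_left P1 F2 h = (\<Sum>(c, hs)\<leftarrow>P1. \<Sum>(u, y, v)\<leftarrow>splits hs.
     sc (phi (monomial v)) (sc (ipH phi X y h) (sc c (monomial u)) * F2))"

definition correction_right :: "'a \<Rightarrow> polyX \<Rightarrow> stepfn \<Rightarrow> 'a" where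
  "correction_right F1 P2 h = (\<Sum>(c, hs)\<leftarrow>P2. \<Sum>(u, y, v)\<leftarrow>splits hs.
     sc (phi (sc c (monomial u))) (sc (ipH phi X y h) F1 * monomial v))"

lemma deltaX_summand:
  "sharp [(evalX sc X P1, evalX sc X P2)] (Xh X h) - IdphiId sc phi (pairH3 sc phi X (DX2 sc X P1 P2) h)
   = evalX sc X P1 * Xh X h * evalX sc X P2
     - correction_left P1 (evalX sc X P2) h - correction_right (evalX sc X P1) P2 h"
  unfolding DX2_def
  by (simp add: sharp_def IdphiId_def pairH3_def DX_eq_splits correction_left_def correction_right_def
      tens3_scale_def sum_list_map_concat sum_list_concat map_concat case_prod_unfold o_def)

lemma dual_triple_product:
  "dual ys (evalX sc X P1 * Xh X h * evalX sc X P2) = (\<Sum>(c1, as)\<leftarrow>P1. \<Sum>(c2, bs)\<leftarrow>P2.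
     cnj c1 * cnj c2 * dual ys (monomial as * Xh X h * monomial bs))"
proof -
  have left: "dual ys (evalX sc X P1 * Xh X h * z)
      = (\<Sum>(c1, as)\<leftarrow>P1. cnj c1 * dual ys (monomial as * Xh X h * z))" for z
    by (simp only: mult.assoc dual_evalX_left)
  have "dual ys (evalX sc X P1 * Xh X h * evalX sc X P2) = (\<Sum>(c2, bs)\<leftarrow>P2.
      cnj c2 * (\<Sum>(c1, as)\<leftarrow>P1. cnj c1 * dual ys (monomial as * Xh X h * monomial bs)))"
    by (simp only: dual_evalX_right left)
  then show ?thesis
    by (simp add: sum_list_const_mult[symmetric] case_prod_unfold mult_ac sum_list_swap[of _ P2])
qed

lemma dual_correction_left:
  "dual ys (correction_left P1 (evalX sc X P2) h)
   = (\<Sum>(c1, as)\<leftarrow>P1. \<Sum>(c2, bs)\<leftarrow>P2. cnj c1 * cnj c2 * contractions_left ys as bs h)"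
  unfolding correction_left_def dual_sum_list
proof (intro arg_cong[where f = sum_list] map_cong refl, clarify)
  fix c1 as
  have "dual ys (\<Sum>(u, y, v)\<leftarrow>splits as. sc (phi (monomial v)) (sc (ipH phi X y h) (sc c1 (monomial u))
        * evalX sc X P2))
    = (\<Sum>(u, y, v)\<leftarrow>splits as. \<Sum>(c2, bs)\<leftarrow>P2.
        cnj c1 * cnj c2 * (cnj (phi (monomial v) * ipH phi X y h) * dual ys (monomial u * monomial bs)))"
    by (simp add: dual_sum_list dual_sc sc_mult_left dual_evalX_right sum_list_const_mult[symmetric]
        case_prod_unfold mult_ac)
  then show "dual ys (\<Sum>(u, y, v)\<leftarrow>splits as. sc (phi (monomial v)) (sc (ipH phi X y h) (sc c1 (monomial u))
        * evalX sc X P2))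
    = (\<Sum>(c2, bs)\<leftarrow>P2. cnj c1 * cnj c2 * contractions_left ys as bs h)"
    by (simp add: case_prod_unfold sum_list_swap[of _ "splits as"] sum_list_const_mult[symmetric]
        contractions_left_def)
qed

lemma dual_correction_right:
  "dual ys (correction_right (evalX sc X P1) P2 h)
   = (\<Sum>(c1, as)\<leftarrow>P1. \<Sum>(c2, bs)\<leftarrow>P2. cnj c1 * cnj c2 * contractions_right ys as bs h)"
proof -
  have "dual ys (correction_right (evalX sc X P1) P2 h)
     = (\<Sum>(c2, bs)\<leftarrow>P2. \<Sum>(c1, as)\<leftarrow>P1. cnj c1 * cnj c2 * contractions_right ys as bs h)"
    unfolding correction_right_def dual_sum_list
  proof (intro arg_cong[where f = sum_list] map_cong refl, clarify)
    fix c2 bs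
    have "dual ys (\<Sum>(u, y, v)\<leftarrow>splits bs. sc (phi (sc c2 (monomial u)))
          (sc (ipH phi X y h) (evalX sc X P1) * monomial v))
      = (\<Sum>(u, y, v)\<leftarrow>splits bs. \<Sum>(c1, as)\<leftarrow>P1.
          cnj c1 * cnj c2 * (cnj (phi (monomial u) * ipH phi X y h) * dual ys (monomial as * monomial v)))"
      by (simp add: dual_sum_list dual_sc sc_mult_left phi_sc dual_evalX_left sum_list_const_mult[symmetric]
          case_prod_unfold mult_ac)
    then show "dual ys (\<Sum>(u, y, v)\<leftarrow>splits bs. sc (phi (sc c2 (monomial u)))
          (sc (ipH phi X y h) (evalX sc X P1) * monomial v))
      = (\<Sum>(c1, as)\<leftarrow>P1. cnj c1 * cnj c2 * contractions_right ys as bs h)"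
      by (simp add: case_prod_unfold sum_list_swap[of _ "splits bs"] sum_list_const_mult[symmetric]
          contractions_right_def)
  qed
  then show ?thesis by (simp add: case_prod_unfold sum_list_swap[of _ P2])
qed


lemma phi_monomial_st_evalX:
  assumes "\<forall>(c, as)\<in>set P. \<forall>g\<in>set as. step_in T g"
  shows "phi (monomial u * st (evalX sc X P)) = (\<Sum>(c, as)\<leftarrow>P. cnj c * phi (monomial u * monomial (rev as)))"
proof -
  have "phi (monomial u * st (evalX sc X P)) = dual u (evalX sc X P * 1)" by (simp add: dual_def)
  also have "\<dots> = (\<Sum>(c, as)\<leftarrow>P. cnj c * phi (monomial u * monomial (rev as)))"
    unfolding dual_evalX_left using assms
    by (intro arg_cong[where f = sum_list] map_cong refl) (auto simp: dual_def st_monomial)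
  finally show ?thesis .
qed

lemma contractions_Y_expand:
  assumes "\<forall>(c, as)\<in>set P1. \<forall>g\<in>set as. step_in T g" "\<forall>(c, bs)\<in>set P2. \<forall>g\<in>set bs. step_in T g"
  shows "(\<Sum>(u, y, v)\<leftarrow>splits ys. ipH phi X y h
      * (phi (monomial u * st (evalX sc X P1)) * phi (monomial v * st (evalX sc X P2))))
    = (\<Sum>(c1, as)\<leftarrow>P1. \<Sum>(c2, bs)\<leftarrow>P2. cnj c1 * cnj c2 * contractions_Y ys as bs h)"
proof -
  have "(\<Sum>(u, y, v)\<leftarrow>splits ys. ipH phi X y h
      * (phi (monomial u * st (evalX sc X P1)) * phi (monomial v * st (evalX sc X P2))))
    = (\<Sum>(u, y, v)\<leftarrow>splits ys. \<Sum>(c1, as)\<leftarrow>P1. \<Sum>(c2, bs)\<leftarrow>P2. cnj c1 * cnj c2 *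
        (ipH phi X y h * (phi (monomial u * monomial (rev as)) * phi (monomial v * monomial (rev bs)))))"
    by (simp add: phi_monomial_st_evalX[OF assms(1)] phi_monomial_st_evalX[OF assms(2)]
        sum_list_const_mult[symmetric] sum_list_mult_const[symmetric] case_prod_unfold mult_ac
        sum_list_swap[of _ P2])
  then show ?thesis
    by (simp add: case_prod_unfold sum_list_swap[of _ "splits ys"] sum_list_const_mult[symmetric]
        contractions_Y_def)
qed

lemma dual_deltaX_summand:
  assumes h: "step_in T h" and ys: "\<forall>g\<in>set ys. step_in T g"
    and P1: "\<forall>(c, as)\<in>set P1. \<forall>g\<in>set as. step_in T g" and P2: "\<forall>(c, bs)\<in>set P2. \<forall>g\<in>set bs. step_in T g"
  shows "dual ys (evalX sc X P1 * Xh X h * evalX sc X P2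
      - correction_left P1 (evalX sc X P2) h - correction_right (evalX sc X P1) P2 h)
    = (\<Sum>(u, y, v)\<leftarrow>splits ys. ipH phi X y h
      * (phi (monomial u * st (evalX sc X P1)) * phi (monomial v * st (evalX sc X P2))))"
proof -
  have "dual ys (evalX sc X P1 * Xh X h * evalX sc X P2
      - correction_left P1 (evalX sc X P2) h - correction_right (evalX sc X P1) P2 h)
    = (\<Sum>(c1, as)\<leftarrow>P1. \<Sum>(c2, bs)\<leftarrow>P2. cnj c1 * cnj c2 * (dual ys (monomial as * Xh X h * monomial bs)
        - contractions_left ys as bs h - contractions_right ys as bs h))"
    by (simp add: dual_diff dual_triple_product dual_correction_left dual_correction_right
        right_diff_distrib case_prod_unfold sum_list_subtractf)
  also have "\<dots> = (\<Sum>(c1, as)\<leftarrow>P1. \<Sum>(c2, bs)\<leftarrow>P2. cnj c1 * cnj c2 * contractions_Y ys as bs h)"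
    using ys P1 P2
    by (intro arg_cong[where f = sum_list] map_cong refl, clarify)+
      (subst monomial_duality[OF h], fastforce+)
  also have "\<dots> = (\<Sum>(u, y, v)\<leftarrow>splits ys. ipH phi X y h
      * (phi (monomial u * st (evalX sc X P1)) * phi (monomial v * st (evalX sc X P2))))"
    by (rule contractions_Y_expand[OF P1 P2, symmetric])
  finally show ?thesis .
qed


lemma phi_evalX_st: "phi (evalX sc X P * st x) = (\<Sum>(c, ys)\<leftarrow>P. c * dual ys x)"
  by (induct P) (auto simp: evalX_monomial distrib_right phi_add sc_mult_left phi_sc dual_def)

lemma deltaX_eq:
  "deltaX sc phi X U = (\<Sum>(P1, P2, h)\<leftarrow>U. evalX sc X P1 * Xh X h * evalX sc X P2
     - correction_left P1 (evalX sc X P2) h - correction_right (evalX sc X P1) P2 h)"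
  by (simp add: deltaX_def deltaX_summand)

lemma phi2_pairH_semi_DX:
  "phi2 phi (pairH_semi sc phi X (DX sc X Y) (E2_star st (EX2_val sc X U)))
   = (\<Sum>(c, ys)\<leftarrow>Y. c * (\<Sum>(P1, P2, h)\<leftarrow>U. \<Sum>(u, y, v)\<leftarrow>splits ys.
       ipH phi X y h * (phi (monomial u * st (evalX sc X P1)) * phi (monomial v * st (evalX sc X P2)))))"
  by (simp add: phi2_def pairH_semi_def DX_eq_splits E2_star_def EX2_val_def tens2_scale_def tens2_mult_def
      tens2_star_def sum_list_map_concat sum_list_concat map_concat case_prod_unfold o_def sc_mult_left phi_sc
      sum_list_const_mult[symmetric] mult_ac sum_list_swap[of _ U])

lemma derivative_divergence_duality:
  assumes "polyX_in T Y" "EX2_in T U"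
  shows "phi (evalX sc X Y * st (deltaX sc phi X U)) =
         phi2 phi (pairH_semi sc phi X (DX sc X Y) (E2_star st (EX2_val sc X U)))"
  unfolding phi_evalX_st deltaX_eq phi2_pairH_semi_DX dual_sum_list
  using assms unfolding polyX_in_def EX2_in_def
  by (intro arg_cong[where f = sum_list] map_cong refl arg_cong[where f = "(*) _"], clarify)+
    (rule dual_deltaX_summand; fastforce)

end

theorem mainTheorem2:
  fixes sc :: "complex \<Rightarrow> 'a::{real_normed_algebra_1,banach} \<Rightarrow> 'a"
    and st :: "'a \<Rightarrow> 'a" and phi :: "'a \<Rightarrow> complex"
    and T :: real and X :: "real \<Rightarrow> 'a"
    and Y :: polyX and U :: EX2
  assumes "nc_prob_space sc st phi"
    and "T > 0"
    and "semicircular_process st phi T X"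
    and "polyX_in T Y"
    and "EX2_in T U"
  shows "phi (evalX sc X Y * st (deltaX sc phi X U)) =
         phi2 phi (pairH_semi sc phi X (DX sc X Y) (E2_star st (EX2_val sc X U)))"
proof -
  interpret semicircular sc st phi T X
    using assms(1,3) by (simp add: semicircular_def semicircular_axioms_def tracial_star_algebra_if_nc_prob_space)
  show ?thesis using derivative_divergence_duality[OF assms(4,5)] .
qed

end
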